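(* Let $A$ be as in the context, suppose $A$ is normal and $cone(A)$ is simplicial, and let $\Delta$ be the coarsest triangulation of $cone(A)$, whose single maximal face is $cone(A)$ itself. Then there exists a cost vector $c\in\mathbb Z^n$ (generic) such that $\Delta=\Delta_c$ and $IP_{A,c}$ is a Gomory family.
   Context: $A\in\mathbb Z^{d\times n}$ has rank $d$, columns $a_1,\dots,a_n$, $cone(A)$ pointed, $\{x\in\mathbb R^n_{\ge0}:Ax=0\}=\{0\}$, $\mathbb ZA=\mathbb Z^d$, $\mathbb NA=\{Au:u\in\mathbb N^n\}$. $A$ is normal if $\mathbb NA=cone(A)\cap\mathbb Z^d$. For $c\in\mathbb R^n$, $\Delta_c$ is the collection of $\sigma\subseteq\{1,\dots,n\}$ (identified with cones $cone(A_\sigma)$) for which some $y\in\mathbb R^d$ has $y\cdot a_j=c_j$ ($j\in\sigma$), $y\cdot a_j<c_j$ ($j\notin\sigma$). A cost vector $c$ is generic if $\Delta_c$ is a triangulation and every program $IP_{A,c}(b)=\min\{c\cdot x: Ax=b,\ x\in\mathbb N^n\}$, $b\in\mathbb NA$, has a unique optimal solution; $IP_{A,c}$ is the family of these programs. For a maximal face $\sigma$ of $\Delta_c$ let $\tilde c_{\bar\sigma}=c_{\bar\sigma}-c_\sigma A_\sigma^{-1}A_{\bar\sigma}$; the group relaxation $G^\sigma(b)$ is $\min\{\tilde c_{\bar\sigma}\cdot x_{\bar\sigma}: A_\sigma x_\sigma+A_{\bar\sigma}x_{\bar\sigma}=b,\ x_{\bar\sigma}\ge0,\ x\in\mathbb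 Z^n\}$, which solves $IP_{A,c}(b)$ if its optimal solution is non-negative. $IP_{A,c}$ is a Gomory family if for every $b\in\mathbb NA$ some maximal face $\sigma$ of $\Delta_c$ has $G^\sigma(b)$ solving $IP_{A,c}(b)$. *)

theory Defs
  imports Complex_Main
begin

text \<open>The matrix A in Z^(d x n) is a function A :: nat => nat => int,
  with A i j the entry in row i (i < d) and column j (j < n); the column a_j is
  (\<lambda>i. A i j). Vectors of R^d, Z^d, R^n, N^n are functions on nat, of which only the
  coordinates below d (resp. n) are relevant.\<close>

definition RA :: "(nat \<Rightarrow> nat \<Rightarrow> int) \<Rightarrow> nat \<Rightarrow> nat \<Rightarrow> real" where
  "RA A i j = real_of_int (A i j)"

definition rcone :: "nat \<Rightarrow> (nat \<Rightarrow> nat \<Rightarrow> real) \<Rightarrow> nat set \<Rightarrow> (nat \<Rightarrow> real) \<Rightarrow> bool" where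
  "rcone d V S b \<longleftrightarrow>
     (\<exists>l::nat \<Rightarrow> real. (\<forall>j\<in>S. 0 \<le> l j) \<and> (\<forall>i<d. (\<Sum>j\<in>S. V i j * l j) = b i))"

definition lin_indep_cols :: "nat \<Rightarrow> (nat \<Rightarrow> nat \<Rightarrow> real) \<Rightarrow> nat set \<Rightarrow> bool" where
  "lin_indep_cols d V S \<longleftrightarrow>
     (\<forall>\<mu>::nat \<Rightarrow> real. (\<forall>i<d. (\<Sum>j\<in>S. V i j * \<mu> j) = 0) \<longrightarrow> (\<forall>j\<in>S. \<mu> j = 0))"

definition standing_assms :: "nat \<Rightarrow> nat \<Rightarrow> (nat \<Rightarrow> nat \<Rightarrow> int) \<Rightarrow> bool" where
  "standing_assms d n A \<longleftrightarrow>
     \<comment> \<open>rank d\<close>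
     (\<forall>b::nat \<Rightarrow> real. \<exists>x::nat \<Rightarrow> real. \<forall>i<d. (\<Sum>j<n. RA A i j * x j) = b i) \<and>
     \<comment> \<open>cone(A) pointed\<close>
     (\<forall>b::nat \<Rightarrow> real. rcone d (RA A) {..<n} b \<and> rcone d (RA A) {..<n} (\<lambda>i. - b i)
        \<longrightarrow> (\<forall>i<d. b i = 0)) \<and>
     \<comment> \<open>{x >= 0 : Ax = 0} = {0}\<close>
     (\<forall>x::nat \<Rightarrow> real. (\<forall>j<n. 0 \<le> x j) \<and> (\<forall>i<d. (\<Sum>j<n. RA A i j * x j) = 0)
        \<longrightarrow> (\<forall>j<n. x j = 0)) \<and>
     \<comment> \<open>ZA = Z^d\<close>
     (\<forall>b::nat \<Rightarrow> int. \<exists>u::nat \<Rightarrow> int. \<forall>i<d. (\<Sum>j<n. A i j * u j) = b i)"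

definition inNA :: "nat \<Rightarrow> nat \<Rightarrow> (nat \<Rightarrow> nat \<Rightarrow> int) \<Rightarrow> (nat \<Rightarrow> int) \<Rightarrow> bool" where
  "inNA d n A b \<longleftrightarrow> (\<exists>u::nat \<Rightarrow> nat. \<forall>i<d. (\<Sum>j<n. A i j * int (u j)) = b i)"

text \<open>A is normal: NA = cone(A) \<inter> Z^d (the inclusion NA \<subseteq> cone(A) \<inter> Z^d always holds).\<close>
definition normal_mat :: "nat \<Rightarrow> nat \<Rightarrow> (nat \<Rightarrow> nat \<Rightarrow> int) \<Rightarrow> bool" where
  "normal_mat d n A \<longleftrightarrow>
     (\<forall>b::nat \<Rightarrow> int. rcone d (RA A) {..<n} (\<lambda>i. real_of_int (b i)) \<longrightarrow> inNA d n A b)"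

definition simplicial_cone :: "nat \<Rightarrow> nat \<Rightarrow> (nat \<Rightarrow> nat \<Rightarrow> int) \<Rightarrow> bool" where
  "simplicial_cone d n A \<longleftrightarrow>
     (\<exists>V::nat \<Rightarrow> nat \<Rightarrow> real. lin_indep_cols d V {..<d} \<and>
        (\<forall>b. rcone d V {..<d} b \<longleftrightarrow> rcone d (RA A) {..<n} b))"

definition triangulation :: "nat \<Rightarrow> nat \<Rightarrow> (nat \<Rightarrow> nat \<Rightarrow> int) \<Rightarrow> nat set set \<Rightarrow> bool" where
  "triangulation d n A \<Delta> \<longleftrightarrow>
     \<Delta> \<noteq> {} \<and>
     (\<forall>\<sigma>\<in>\<Delta>. \<sigma> \<subseteq> {..<n}) \<and>
     (\<forall>\<sigma>\<in>\<Delta>. \<forall>\<tau>. \<tau> \<subseteq> \<sigma> \<longrightarrow> \<tau> \<in> \<Delta>) \<and>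
     (\<forall>\<sigma>\<in>\<Delta>. lin_indep_cols d (RA A) \<sigma>) \<and>
     (\<forall>b. rcone d (RA A) {..<n} b \<longleftrightarrow> (\<exists>\<sigma>\<in>\<Delta>. rcone d (RA A) \<sigma> b)) \<and>
     (\<forall>\<sigma>\<in>\<Delta>. \<forall>\<tau>\<in>\<Delta>. \<forall>b.
        (rcone d (RA A) \<sigma> b \<and> rcone d (RA A) \<tau> b) \<longleftrightarrow> rcone d (RA A) (\<sigma> \<inter> \<tau>) b)"

definition maximal_face :: "nat set set \<Rightarrow> nat set \<Rightarrow> bool" where
  "maximal_face \<Delta> \<sigma> \<longleftrightarrow> \<sigma> \<in> \<Delta> \<and> (\<forall>\<tau>\<in>\<Delta>. \<sigma> \<subseteq> \<tau> \<longrightarrow> \<tau> = \<sigma>)"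

definition coarsest_triangulation :: "nat \<Rightarrow> nat \<Rightarrow> (nat \<Rightarrow> nat \<Rightarrow> int) \<Rightarrow> nat set set \<Rightarrow> bool" where
  "coarsest_triangulation d n A \<Delta> \<longleftrightarrow>
     triangulation d n A \<Delta> \<and>
     (\<exists>\<sigma>. {\<tau>. maximal_face \<Delta> \<tau>} = {\<sigma>} \<and>
          (\<forall>b. rcone d (RA A) \<sigma> b \<longleftrightarrow> rcone d (RA A) {..<n} b))"

definition Delta_c :: "nat \<Rightarrow> nat \<Rightarrow> (nat \<Rightarrow> nat \<Rightarrow> int) \<Rightarrow> (nat \<Rightarrow> real) \<Rightarrow> nat set set" where
  "Delta_c d n A c = {\<sigma>. \<sigma> \<subseteq> {..<n} \<and>
     (\<exists>y::nat \<Rightarrow> real. (\<forall>j\<in>\<sigma>. (\<Sum>i<d. y i * RA A i j) = c j) \<and>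
                      (\<forall>j\<in>{..<n} - \<sigma>. (\<Sum>i<d. y i * RA A i j) < c j))}"

definition ip_feasible :: "nat \<Rightarrow> nat \<Rightarrow> (nat \<Rightarrow> nat \<Rightarrow> int) \<Rightarrow> (nat \<Rightarrow> int) \<Rightarrow> (nat \<Rightarrow> nat) \<Rightarrow> bool" where
  "ip_feasible d n A b u \<longleftrightarrow>
     (\<forall>j\<ge>n. u j = 0) \<and> (\<forall>i<d. (\<Sum>j<n. A i j * int (u j)) = b i)"

definition ip_optimal :: "nat \<Rightarrow> nat \<Rightarrow> (nat \<Rightarrow> nat \<Rightarrow> int) \<Rightarrow> (nat \<Rightarrow> real) \<Rightarrow> (nat \<Rightarrow> int)
    \<Rightarrow> (nat \<Rightarrow> nat) \<Rightarrow> bool" where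
  "ip_optimal d n A c b u \<longleftrightarrow> ip_feasible d n A b u \<and>
     (\<forall>v. ip_feasible d n A b v \<longrightarrow> (\<Sum>j<n. c j * real (u j)) \<le> (\<Sum>j<n. c j * real (v j)))"

definition generic_cost :: "nat \<Rightarrow> nat \<Rightarrow> (nat \<Rightarrow> nat \<Rightarrow> int) \<Rightarrow> (nat \<Rightarrow> real) \<Rightarrow> bool" where
  "generic_cost d n A c \<longleftrightarrow>
     triangulation d n A (Delta_c d n A c) \<and>
     (\<forall>b. inNA d n A b \<longrightarrow> (\<exists>!u. ip_optimal d n A c b u))"

text \<open>c_sigma A_sigma^(-1): the unique y in R^d with y . a_j = c_j for j in sigma
  (coordinates beyond d set to 0).\<close>
definition dual_vec :: "nat \<Rightarrow> (nat \<Rightarrow> nat \<Rightarrow> int) \<Rightarrow> (nat \<Rightarrow> real) \<Rightarrow> nat set \<Rightarrow> nat \<Rightarrow> real" where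
  "dual_vec d A c \<sigma> = (THE y. (\<forall>j\<in>\<sigma>. (\<Sum>i<d. y i * RA A i j) = c j) \<and> (\<forall>i\<ge>d. y i = 0))"

definition reduced_cost :: "nat \<Rightarrow> (nat \<Rightarrow> nat \<Rightarrow> int) \<Rightarrow> (nat \<Rightarrow> real) \<Rightarrow> nat set \<Rightarrow> nat \<Rightarrow> real" where
  "reduced_cost d A c \<sigma> j = c j - (\<Sum>i<d. dual_vec d A c \<sigma> i * RA A i j)"

definition gr_feasible :: "nat \<Rightarrow> nat \<Rightarrow> (nat \<Rightarrow> nat \<Rightarrow> int) \<Rightarrow> nat set \<Rightarrow> (nat \<Rightarrow> int)
    \<Rightarrow> (nat \<Rightarrow> int) \<Rightarrow> bool" where
  "gr_feasible d n A \<sigma> b x \<longleftrightarrow>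
     (\<forall>j\<ge>n. x j = 0) \<and> (\<forall>j\<in>{..<n} - \<sigma>. 0 \<le> x j) \<and>
     (\<forall>i<d. (\<Sum>j<n. A i j * x j) = b i)"

definition gr_optimal :: "nat \<Rightarrow> nat \<Rightarrow> (nat \<Rightarrow> nat \<Rightarrow> int) \<Rightarrow> (nat \<Rightarrow> real) \<Rightarrow> nat set
    \<Rightarrow> (nat \<Rightarrow> int) \<Rightarrow> (nat \<Rightarrow> int) \<Rightarrow> bool" where
  "gr_optimal d n A c \<sigma> b x \<longleftrightarrow> gr_feasible d n A \<sigma> b x \<and>
     (\<forall>x'. gr_feasible d n A \<sigma> b x' \<longrightarrow>
        (\<Sum>j\<in>{..<n} - \<sigma>. reduced_cost d A c \<sigma> j * real_of_int (x j))
          \<le> (\<Sum>j\<in>{..<n} - \<sigma>. reduced_cost d A c \<sigma> j * real_of_int (x' j)))"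

text \<open>G^sigma(b) solves IP_{A,c}(b): its optimal solution is non-negative.\<close>
definition gr_solves :: "nat \<Rightarrow> nat \<Rightarrow> (nat \<Rightarrow> nat \<Rightarrow> int) \<Rightarrow> (nat \<Rightarrow> real) \<Rightarrow> nat set
    \<Rightarrow> (nat \<Rightarrow> int) \<Rightarrow> bool" where
  "gr_solves d n A c \<sigma> b \<longleftrightarrow> (\<exists>x. gr_optimal d n A c \<sigma> b x \<and> (\<forall>j. 0 \<le> x j))"

definition gomory_family :: "nat \<Rightarrow> nat \<Rightarrow> (nat \<Rightarrow> nat \<Rightarrow> int) \<Rightarrow> (nat \<Rightarrow> real) \<Rightarrow> bool" where
  "gomory_family d n A c \<longleftrightarrow>
     (\<forall>b. inNA d n A b \<longrightarrow>
        (\<exists>\<sigma>. maximal_face (Delta_c d n A c) \<sigma> \<and> gr_solves d n A c \<sigma> b))"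

end

theory Submission
  imports Defs
begin

text \<open>The d extreme rays of the simplicial cone(A) are spanned by columns of A; fix a set \<sigma> of
  such columns. A cost vector c vanishing on \<sigma> and positive elsewhere has Delta_c = 2^\<sigma>, the
  coarsest triangulation, and reduced cost c, so G^\<sigma>(b) minimises c over the lattice points x
  with Ax = b and x non-negative off \<sigma>. For such x,
  x_\<sigma> = A_\<sigma>^(-1) b - \<Sum>_{j \<notin> \<sigma>} x_j A_\<sigma>^(-1) a_j, so x_\<sigma> is at most the floor of
  A_\<sigma>^(-1) b, and the total height \<Sum>_{j \<notin> \<sigma>} x_j h_j, where h_j > 0 is the coordinate sum
  of A_\<sigma>^(-1) a_j, is the sum of the fractional parts of A_\<sigma>^(-1) b plus the total amount by
  which x_\<sigma> falls short of that floor. Normality provides a non-negative floor solution, one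
  with x_\<sigma> equal to the floor, and floor solutions have bounded coordinates. A cost that is a
  large multiple of h_j therefore is minimised, in the group relaxation as in the integer
  program, only at floor solutions, which are non-negative; a small base-R tie-breaker makes
  the minimiser unique.\<close>

section \<open>Column bases of simplicial cones\<close>

lemma lin_indep_colsD:
  assumes "lin_indep_cols d V S" "\<forall>i<d. (\<Sum>j\<in>S. V i j * m j) = 0" "j \<in> S"
  shows "m j = 0"
  using assms unfolding lin_indep_cols_def by blast

lemma lin_indep_cols_subset:
  assumes "lin_indep_cols d V S" "finite S" "T \<subseteq> S"
  shows "lin_indep_cols d V T"
  unfolding lin_indep_cols_def
proof (intro allI impI ballI)
  fix m :: "nat \<Rightarrow> real" and j
  assume comb: "\<forall>i<d. (\<Sum>j\<in>T. V i j * m j) = 0" and j: "j \<in> T"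
  define m' where "m' j = (if j \<in> T then m j else 0)" for j
  have "\<forall>i<d. (\<Sum>j\<in>S. V i j * m' j) = 0"
  proof (intro allI impI)
    fix i assume "i < d"
    have "(\<Sum>j\<in>S. V i j * m' j) = (\<Sum>j\<in>T. V i j * m j)"
      by (rule sum.mono_neutral_cong_right) (use assms in \<open>auto simp: m'_def\<close>)
    then show "(\<Sum>j\<in>S. V i j * m' j) = 0" using comb \<open>i < d\<close> by simp
  qed
  with lin_indep_colsD[OF assms(1)] j assms(3) show "m j = 0"
    by (metis m'_def subsetD)
qed

lemma rcone_column:
  assumes "finite S" "j \<in> S"
  shows "rcone d V S (\<lambda>i. V i j)"
  unfolding rcone_def
  by (rule exI[of _ "\<lambda>j'. if j' = j then 1 else 0"]) (use assms in \<open>simp add: if_distrib cong: if_cong\<close>)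

lemma rcone_mono:
  assumes "rcone d V S b" "finite T" "S \<subseteq> T"
  shows "rcone d V T b"
proof -
  obtain l where l: "\<forall>j\<in>S. 0 \<le> l j" "\<forall>i<d. (\<Sum>j\<in>S. V i j * l j) = b i"
    using assms(1) unfolding rcone_def by blast
  define l' where "l' j = (if j \<in> S then l j else 0)" for j
  have "(\<Sum>j\<in>T. V i j * l' j) = (\<Sum>j\<in>S. V i j * l j)" for i
    by (rule sum.mono_neutral_cong_right) (use assms in \<open>auto simp: l'_def\<close>)
  then show ?thesis
    unfolding rcone_def using l by (intro exI[of _ l']) (auto simp: l'_def)
qed

locale scaled_columns =
  fixes d :: nat and V W :: "nat \<Rightarrow> nat \<Rightarrow> real" and K :: "nat set"
    and f :: "nat \<Rightarrow> nat" and t :: "nat \<Rightarrow> real"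
  assumes inj: "inj_on f K" and pos: "\<And>k. k \<in> K \<Longrightarrow> 0 < t k"
    and scaled: "\<And>i k. i < d \<Longrightarrow> k \<in> K \<Longrightarrow> W i (f k) = t k * V i k"
begin

lemma comb_eq: "i < d \<Longrightarrow> (\<Sum>j\<in>f ` K. W i j * m j) = (\<Sum>k\<in>K. V i k * (t k * m (f k)))"
  by (simp add: sum.reindex[OF inj] scaled mult_ac)

lemma lin_indep_cols_image:
  assumes "lin_indep_cols d V K"
  shows "lin_indep_cols d W (f ` K)"
  unfolding lin_indep_cols_def
proof (intro allI impI ballI)
  fix m j assume "\<forall>i<d. (\<Sum>j\<in>f ` K. W i j * m j) = 0" and "j \<in> f ` K"
  then obtain k where k: "k \<in> K" "j = f k" and "\<forall>i<d. (\<Sum>k\<in>K. V i k * (t k * m (f k))) = 0"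
    by (auto simp: comb_eq)
  then have "t k * m (f k) = 0" using lin_indep_colsD[OF assms, of "\<lambda>k. t k * m (f k)"] by blast
  then show "m j = 0" using pos[OF k(1)] k(2) by simp
qed

lemma rcone_image_iff: "rcone d W (f ` K) b \<longleftrightarrow> rcone d V K b"
proof
  assume "rcone d W (f ` K) b"
  then obtain m where "\<forall>j\<in>f ` K. 0 \<le> m j" "\<forall>i<d. (\<Sum>j\<in>f ` K. W i j * m j) = b i"
    unfolding rcone_def by blast
  then show "rcone d V K b"
    unfolding rcone_def using pos
    by (intro exI[of _ "\<lambda>k. t k * m (f k)"]) (auto simp: comb_eq less_imp_le)
next
  assume "rcone d V K b"
  then obtain l where l: "\<forall>k\<in>K. 0 \<le> l k" "\<forall>i<d. (\<Sum>k\<in>K. V i k * l k) = b i"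
    unfolding rcone_def by blast
  define m where "m j = l (inv_into K f j) / t (inv_into K f j)" for j
  have m_f: "t k * m (f k) = l k" if "k \<in> K" for k
    using pos[OF that] that inj by (simp add: m_def)
  have "(\<Sum>j\<in>f ` K. W i j * m j) = b i" if "i < d" for i
    using l(2) that by (simp add: comb_eq m_f cong: sum.cong)
  moreover have "0 \<le> m j" if "j \<in> f ` K" for j
    using that l(1) pos by (auto simp: m_def inv_into_f_f[OF inj] less_imp_le)
  ultimately show "rcone d W (f ` K) b"
    unfolding rcone_def by blast
qed

end

lemma lin_indep_cols_comb_delta:
  assumes li: "lin_indep_cols d V {..<d}" and k: "k < d" and l: "l < d"
    and V_comb: "\<forall>i<d. (\<Sum>j<n. W i j * lam j) = V i k"
    and W_comb: "\<And>j. j < n \<Longrightarrow> \<forall>i<d. (\<Sum>l<d. V i l * \<mu> j l) = W i j"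
  shows "(\<Sum>j<n. lam j * \<mu> j l) = (if l = k then 1 else 0)"
proof -
  have "\<forall>i<d. (\<Sum>l<d. V i l * ((\<Sum>j<n. lam j * \<mu> j l) - (if l = k then 1 else 0))) = 0"
  proof (intro allI impI)
    fix i assume i: "i < d"
    have "(\<Sum>l<d. V i l * (\<Sum>j<n. lam j * \<mu> j l)) = (\<Sum>j<n. lam j * (\<Sum>l<d. V i l * \<mu> j l))"
      unfolding sum_distrib_left by (subst sum.swap) (simp add: mult_ac)
    also have "\<dots> = V i k"
      using V_comb W_comb i by (simp add: mult.commute)
    moreover have "(\<Sum>l<d. V i l * (if l = k then 1 else 0)) = V i k"
      using k by (simp add: if_distrib cong: if_cong)
    ultimately show "(\<Sum>l<d. V i l * ((\<Sum>j<n. lam j * \<mu> j l) - (if l = k then 1 else 0))) = 0"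
      by (simp only: right_diff_distrib sum_subtractf)
  qed
  from lin_indep_colsD[OF li this] l show ?thesis by simp
qed

lemma simplicial_generator_is_column:
  assumes li: "lin_indep_cols d V {..<d}"
    and same_cone: "\<And>b. rcone d V {..<d} b \<longleftrightarrow> rcone d W {..<n} b"
    and k: "k < d"
  shows "\<exists>j<n. \<exists>t>0. \<forall>i<d. W i j = t * V i k"
proof -
  have "\<exists>\<mu>. (\<forall>l<d. 0 \<le> \<mu> l) \<and> (\<forall>i<d. (\<Sum>l<d. V i l * \<mu> l) = W i j)" if "j < n" for j
    using same_cone[of "\<lambda>i. W i j"] rcone_column[of "{..<n}" j d W] that unfolding rcone_def by auto
  then obtain \<mu> where \<mu>: "\<And>j. j < n \<Longrightarrow> (\<forall>l<d. 0 \<le> \<mu> j l) \<and> (\<forall>i<d. (\<Sum>l<d. V i l * \<mu> j l) = W i j)"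
    by metis
  obtain lam where lam: "\<forall>j<n. 0 \<le> lam j" "\<forall>i<d. (\<Sum>j<n. W i j * lam j) = V i k"
    using same_cone[of "\<lambda>i. V i k"] rcone_column[of "{..<d}" k d V] k unfolding rcone_def by auto
  have delta: "(\<Sum>j<n. lam j * \<mu> j l) = (if l = k then 1 else 0)" if "l < d" for l
    using lin_indep_cols_comb_delta[OF li k that lam(2)] \<mu> by blast
  have nonneg: "0 \<le> lam j * \<mu> j l" if "j < n" "l < d" for j l
    using lam(1) \<mu> that by simp
  text \<open>The sum for l = k is 1, so some term lam_j \<mu>_jk is positive; the sums for l \<noteq> k
    vanish, so \<mu>_jl = 0 for that j, and W_j is a positive multiple of V_k.\<close>
  have "(\<Sum>j<n. lam j * \<mu> j k) \<noteq> 0"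
    using delta[OF k] by simp
  then obtain j where j: "j < n" and "lam j * \<mu> j k \<noteq> 0"
    by (rule sum.not_neutral_contains_not_neutral) simp
  then have lam_pos: "0 < lam j" and \<mu>jk: "0 < \<mu> j k"
    using nonneg[OF j k] lam(1) \<mu>[OF j] k by (auto simp: less_le)
  have \<mu>jl: "\<mu> j l = 0" if "l < d" "l \<noteq> k" for l
  proof -
    have "lam j * \<mu> j l = 0"
      using delta[OF \<open>l < d\<close>] sum_nonneg_eq_0_iff[of "{..<n}" "\<lambda>j. lam j * \<mu> j l"] nonneg that j
      by auto
    then show ?thesis using lam_pos by simp
  qed
  have "W i j = \<mu> j k * V i k" if "i < d" for i
  proof -
    have "W i j = (\<Sum>l<d. V i l * \<mu> j l)" using \<mu>[OF j] that by simp
    also have "\<dots> = (\<Sum>l<d. if l = k then V i k * \<mu> j k else 0)"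
      by (rule sum.cong) (use \<mu>jl in auto)
    also have "\<dots> = V i k * \<mu> j k"
      using k by simp
    finally show ?thesis by simp
  qed
  then show ?thesis using j \<mu>jk by blast
qed

lemma simplicial_cone_column_basis:
  assumes "simplicial_cone d n A"
  obtains \<sigma> where "\<sigma> \<subseteq> {..<n}" "lin_indep_cols d (RA A) \<sigma>"
    "\<And>b. rcone d (RA A) \<sigma> b \<longleftrightarrow> rcone d (RA A) {..<n} b"
proof -
  obtain V where li: "lin_indep_cols d V {..<d}"
    and same_cone: "\<And>b. rcone d V {..<d} b \<longleftrightarrow> rcone d (RA A) {..<n} b"
    using assms unfolding simplicial_cone_def by blast
  obtain f t where f: "\<And>k. k < d \<Longrightarrow> f k < n \<and> 0 < t k \<and> (\<forall>i<d. RA A i (f k) = t k * V i k)"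
    using simplicial_generator_is_column[OF li same_cone] by metis
  have "inj_on f {..<d}"
  proof (rule inj_onI, rule ccontr)
    fix k k' assume k: "k \<in> {..<d}" "k' \<in> {..<d}" and same: "f k = f k'" and "k \<noteq> k'"
    define m where "m l = (if l = k then t k else if l = k' then - t k' else 0)" for l
    have "V i k * t k = V i k' * t k'" if "i < d" for i
      using f[of k] f[of k'] k same that by (simp add: mult.commute)
    then have "\<forall>i<d. (\<Sum>l<d. V i l * m l) = 0"
      using k \<open>k \<noteq> k'\<close> by (auto simp: m_def if_distrib sum.If_cases)
    then have "m k = 0" using lin_indep_colsD[OF li] k(1) by blast
    then show False using f[of k] k by (simp add: m_def)
  qed
  then interpret scaled_columns d V "RA A" "{..<d}" f t
    by unfold_locales (use f in auto)
  show thesis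
  proof
    show "f ` {..<d} \<subseteq> {..<n}" using f by auto
    show "lin_indep_cols d (RA A) (f ` {..<d})" by (rule lin_indep_cols_image[OF li])
    show "rcone d (RA A) (f ` {..<d}) b \<longleftrightarrow> rcone d (RA A) {..<n} b" for b
      by (simp add: rcone_image_iff same_cone)
  qed
qed

section \<open>Base-R expansions\<close>

lemma base_expansion_bounds:
  fixes R :: int
  assumes "1 \<le> R" "\<forall>j<n. 0 \<le> z j \<and> z j < R"
  shows "0 \<le> (\<Sum>j<n. R ^ j * z j) \<and> (\<Sum>j<n. R ^ j * z j) < R ^ n"
  using assms(2)
proof (induction n)
  case (Suc n)
  then have "R ^ n * z n \<le> R ^ n * (R - 1)" "0 \<le> R ^ n * z n"
    using assms(1) by (auto intro: mult_left_mono)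
  with Suc show ?case by (simp add: algebra_simps)
qed simp

lemma base_expansion_inj:
  fixes R :: int
  assumes "1 \<le> R" "\<forall>j<n. 0 \<le> z j \<and> z j < R" "\<forall>j<n. 0 \<le> z' j \<and> z' j < R"
    and "(\<Sum>j<n. R ^ j * z j) = (\<Sum>j<n. R ^ j * z' j)"
  shows "\<forall>j<n. z j = z' j"
  using assms(2-4)
proof (induction n)
  case (Suc n)
  let ?s = "\<Sum>j<n. R ^ j * z j" and ?s' = "\<Sum>j<n. R ^ j * z' j"
  have s: "0 \<le> ?s" "?s < R ^ n" and s': "0 \<le> ?s'" "?s' < R ^ n"
    using base_expansion_bounds[OF assms(1)] Suc.prems by auto
  have eq: "?s + R ^ n * z n = ?s' + R ^ n * z' n"
    using Suc.prems(3) by simp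
  have digit: "(t + p * y) div p = y \<and> (t + p * y) mod p = t" if "0 \<le> t" "t < p" for t p y :: int
    using that by simp
  from digit[OF s, of "z n"] have "z n = (?s' + R ^ n * z' n) div R ^ n" "?s = (?s' + R ^ n * z' n) mod R ^ n"
    unfolding eq by auto
  with digit[OF s', of "z' n"] have top: "z n = z' n" and rest: "?s = ?s'"
    by auto
  have "\<forall>j<n. z j = z' j"
    using Suc.IH[OF _ _ rest] Suc.prems(1,2) by simp
  with top show ?case
    by (auto simp: less_Suc_eq)
qed simp

section \<open>Coordinates with respect to a column basis\<close>

locale cone_basis =
  fixes d n :: nat and A :: "nat \<Rightarrow> nat \<Rightarrow> int" and \<sigma> :: "nat set"
  assumes standing: "standing_assms d n A"
    and basis_subset: "\<sigma> \<subseteq> {..<n}"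
    and basis_indep: "lin_indep_cols d (RA A) \<sigma>"
    and basis_cone: "\<And>b. rcone d (RA A) \<sigma> b \<longleftrightarrow> rcone d (RA A) {..<n} b"
begin

lemma finite_basis: "finite \<sigma>"
  using basis_subset finite_subset by blast

lemma rcone_basis_column: "j < n \<Longrightarrow> rcone d (RA A) \<sigma> (\<lambda>i. RA A i j)"
  using basis_cone rcone_column[of "{..<n}" j d "RA A"] by simp

lemma basis_spans: "\<exists>l. \<forall>i<d. (\<Sum>k\<in>\<sigma>. RA A i k * l k) = b i"
proof -
  obtain x where x: "\<And>i. i < d \<Longrightarrow> (\<Sum>j<n. RA A i j * x j) = b i"
    using standing[unfolded standing_assms_def, THEN conjunct1] by blast
  have "\<exists>l. j < n \<longrightarrow> (\<forall>i<d. (\<Sum>k\<in>\<sigma>. RA A i k * l k) = RA A i j)" for j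
  proof (cases "j < n")
    case True
    then obtain l where "\<forall>i<d. (\<Sum>k\<in>\<sigma>. RA A i k * l k) = RA A i j"
      using rcone_basis_column[OF True] unfolding rcone_def by blast
    then show ?thesis by blast
  qed simp
  then obtain L where L: "\<And>j i. j < n \<Longrightarrow> i < d \<Longrightarrow> (\<Sum>k\<in>\<sigma>. RA A i k * L j k) = RA A i j"
    using choice[of "\<lambda>j l. j < n \<longrightarrow> (\<forall>i<d. (\<Sum>k\<in>\<sigma>. RA A i k * l k) = RA A i j)"] by blast
  have "(\<Sum>k\<in>\<sigma>. RA A i k * (\<Sum>j<n. x j * L j k)) = b i" if i: "i < d" for i
  proof -
    have "(\<Sum>k\<in>\<sigma>. RA A i k * (\<Sum>j<n. x j * L j k)) = (\<Sum>j<n. x j * (\<Sum>k\<in>\<sigma>. RA A i k * L j k))"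
      unfolding sum_distrib_left by (subst sum.swap) (simp add: mult_ac)
    also have "\<dots> = (\<Sum>j<n. x j * RA A i j)"
      using L i by simp
    also have "\<dots> = (\<Sum>j<n. RA A i j * x j)"
      by (rule sum.cong[OF refl mult.commute])
    finally show ?thesis
      using x[OF i] by simp
  qed
  then show ?thesis
    by (intro exI[of _ "\<lambda>k. \<Sum>j<n. x j * L j k"]) blast
qed

text \<open>coord b = A_\<sigma>^(-1) b; the values outside \<sigma> are unspecified.\<close>
definition coord :: "(nat \<Rightarrow> real) \<Rightarrow> nat \<Rightarrow> real" where
  "coord b = (SOME l. \<forall>i<d. (\<Sum>k\<in>\<sigma>. RA A i k * l k) = b i)"

lemma coord_eq: "i < d \<Longrightarrow> (\<Sum>k\<in>\<sigma>. RA A i k * coord b k) = b i"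
  using someI_ex[OF basis_spans[of b]] unfolding coord_def by blast

lemma coord_unique:
  assumes "\<forall>i<d. (\<Sum>k\<in>\<sigma>. RA A i k * l k) = b i" "k \<in> \<sigma>"
  shows "l k = coord b k"
proof -
  have "\<forall>i<d. (\<Sum>k\<in>\<sigma>. RA A i k * (l k - coord b k)) = 0"
    using assms(1) coord_eq by (simp add: right_diff_distrib sum_subtractf)
  from lin_indep_colsD[OF basis_indep this assms(2)] show ?thesis by simp
qed

lemma coord_cong: "(\<And>i. i < d \<Longrightarrow> b i = b' i) \<Longrightarrow> coord b = coord b'"
  unfolding coord_def by (rule arg_cong[where f = Eps]) (auto intro!: ext)

lemma coord_sum:
  assumes "finite I" "k \<in> \<sigma>"
  shows "coord (\<lambda>i. \<Sum>m\<in>I. t m * w m i) k = (\<Sum>m\<in>I. t m * coord (w m) k)"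
proof (rule coord_unique[symmetric, OF _ assms(2)], intro allI impI)
  fix i assume "i < d"
  have "(\<Sum>j\<in>\<sigma>. RA A i j * (\<Sum>m\<in>I. t m * coord (w m) j))
      = (\<Sum>m\<in>I. t m * (\<Sum>j\<in>\<sigma>. RA A i j * coord (w m) j))"
    unfolding sum_distrib_left by (subst sum.swap) (simp add: mult_ac)
  then show "(\<Sum>j\<in>\<sigma>. RA A i j * (\<Sum>m\<in>I. t m * coord (w m) j)) = (\<Sum>m\<in>I. t m * w m i)"
    using coord_eq[OF \<open>i < d\<close>] by simp
qed

lemma coord_basis_column:
  assumes "j \<in> \<sigma>" "k \<in> \<sigma>"
  shows "coord (\<lambda>i. RA A i j) k = (if k = j then 1 else 0)"
  by (rule coord_unique[symmetric]) (use assms finite_basis in \<open>simp_all add: if_distrib cong: if_cong\<close>)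

lemma coord_nonneg_of_rcone: "rcone d (RA A) \<sigma> b \<Longrightarrow> k \<in> \<sigma> \<Longrightarrow> 0 \<le> coord b k"
  unfolding rcone_def using coord_unique by fastforce

lemma coord_column_nonneg: "j < n \<Longrightarrow> k \<in> \<sigma> \<Longrightarrow> 0 \<le> coord (\<lambda>i. RA A i j) k"
  by (rule coord_nonneg_of_rcone[OF rcone_basis_column])

lemma coord_comb:
  assumes "k \<in> \<sigma>"
  shows "coord (\<lambda>i. \<Sum>j<n. RA A i j * x j) k
           = x k + (\<Sum>j\<in>{..<n} - \<sigma>. x j * coord (\<lambda>i. RA A i j) k)"
proof -
  have "coord (\<lambda>i. \<Sum>j<n. RA A i j * x j) k = (\<Sum>j<n. x j * coord (\<lambda>i. RA A i j) k)"
    using coord_sum[of "{..<n}" k x "\<lambda>j i. RA A i j"] assms by (simp add: mult.commute)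
  also have "\<dots> = (\<Sum>j\<in>\<sigma>. x j * coord (\<lambda>i. RA A i j) k)
                  + (\<Sum>j\<in>{..<n} - \<sigma>. x j * coord (\<lambda>i. RA A i j) k)"
    by (simp add: sum.subset_diff[OF basis_subset] add.commute)
  also have "(\<Sum>j\<in>\<sigma>. x j * coord (\<lambda>i. RA A i j) k) = x k"
    using assms finite_basis by (simp add: coord_basis_column if_distrib cong: if_cong)
  finally show ?thesis .
qed

lemma coord_row:
  assumes "k \<in> \<sigma>"
  shows "(\<Sum>i<d. coord (\<lambda>i'. if i' = i then 1 else 0) k * w i) = coord w k"
proof -
  have "coord w = coord (\<lambda>i'. \<Sum>i<d. w i * (if i' = i then 1 else 0))"
    by (rule coord_cong) (simp add: if_distrib cong: if_cong)
  then show ?thesis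
    using coord_sum[of "{..<d}" k w "\<lambda>i i'. if i' = i then 1 else 0"] assms
    by (simp add: mult.commute)
qed

section \<open>Faces of the basis cone and the subdivision Delta_c\<close>

lemma rcone_face_iff:
  assumes "\<tau> \<subseteq> \<sigma>"
  shows "rcone d (RA A) \<tau> b \<longleftrightarrow> (\<forall>k\<in>\<sigma>. 0 \<le> coord b k) \<and> (\<forall>k\<in>\<sigma> - \<tau>. coord b k = 0)"
proof
  assume "rcone d (RA A) \<tau> b"
  then obtain l where l: "\<forall>j\<in>\<tau>. 0 \<le> l j" "\<forall>i<d. (\<Sum>j\<in>\<tau>. RA A i j * l j) = b i"
    unfolding rcone_def by blast
  define l' where "l' j = (if j \<in> \<tau> then l j else 0)" for j
  have "(\<Sum>j\<in>\<sigma>. RA A i j * l' j) = (\<Sum>j\<in>\<tau>. RA A i j * l j)" for i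
    by (rule sum.mono_neutral_cong_right) (use finite_basis assms in \<open>auto simp: l'_def\<close>)
  then have l'_coord: "k \<in> \<sigma> \<Longrightarrow> l' k = coord b k" for k
    using l(2) coord_unique by simp
  show "(\<forall>k\<in>\<sigma>. 0 \<le> coord b k) \<and> (\<forall>k\<in>\<sigma> - \<tau>. coord b k = 0)"
  proof (intro conjI ballI)
    show "0 \<le> coord b k" if "k \<in> \<sigma>" for k
      using l'_coord[OF that] l(1) by (cases "k \<in> \<tau>") (auto simp: l'_def)
    show "coord b k = 0" if "k \<in> \<sigma> - \<tau>" for k
      using l'_coord[of k] that by (simp add: l'_def)
  qed
next
  assume "(\<forall>k\<in>\<sigma>. 0 \<le> coord b k) \<and> (\<forall>k\<in>\<sigma> - \<tau>. coord b k = 0)"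
  moreover have "(\<Sum>j\<in>\<tau>. RA A i j * coord b j) = (\<Sum>j\<in>\<sigma>. RA A i j * coord b j)" if "i < d" for i
    by (rule sum.mono_neutral_left) (use finite_basis assms calculation in auto)
  ultimately show "rcone d (RA A) \<tau> b"
    unfolding rcone_def using assms coord_eq by (intro exI[of _ "coord b"]) auto
qed

lemma triangulation_faces: "triangulation d n A (Pow \<sigma>)"
  unfolding triangulation_def
proof (intro conjI ballI allI impI)
  show "\<tau> \<subseteq> {..<n}" if "\<tau> \<in> Pow \<sigma>" for \<tau>
    using that basis_subset by auto
  show "lin_indep_cols d (RA A) \<tau>" if "\<tau> \<in> Pow \<sigma>" for \<tau>
    using lin_indep_cols_subset[OF basis_indep finite_basis] that by blast
  show "rcone d (RA A) {..<n} b \<longleftrightarrow> (\<exists>\<tau>\<in>Pow \<sigma>. rcone d (RA A) \<tau> b)" for b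
    using basis_cone rcone_mono[OF _ finite_basis] by blast
  show "rcone d (RA A) \<tau> b \<and> rcone d (RA A) \<tau>' b \<longleftrightarrow> rcone d (RA A) (\<tau> \<inter> \<tau>') b"
    if "\<tau> \<in> Pow \<sigma>" "\<tau>' \<in> Pow \<sigma>" for \<tau> \<tau>' b
  proof -
    have "\<tau> \<subseteq> \<sigma>" "\<tau>' \<subseteq> \<sigma>" "\<tau> \<inter> \<tau>' \<subseteq> \<sigma>" using that by auto
    then show ?thesis by (simp only: rcone_face_iff) blast
  qed
qed auto

lemma coarsest_triangulation_faces: "coarsest_triangulation d n A (Pow \<sigma>)"
proof -
  have "{\<tau>. maximal_face (Pow \<sigma>) \<tau>} = {\<sigma>}"
    unfolding maximal_face_def by blast
  then show ?thesis
    unfolding coarsest_triangulation_def using triangulation_faces basis_cone by blast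
qed

lemma dot_eq_coord_sum:
  "(\<Sum>i<d. y i * w i) = (\<Sum>k\<in>\<sigma>. coord w k * (\<Sum>i<d. y i * RA A i k))"
proof -
  have "(\<Sum>i<d. y i * w i) = (\<Sum>i<d. y i * (\<Sum>k\<in>\<sigma>. RA A i k * coord w k))"
    by (rule sum.cong) (simp_all add: coord_eq)
  also have "\<dots> = (\<Sum>k\<in>\<sigma>. coord w k * (\<Sum>i<d. y i * RA A i k))"
    unfolding sum_distrib_left by (subst sum.swap) (simp add: mult_ac)
  finally show ?thesis .
qed

lemma Delta_c_subset_faces:
  assumes c_basis: "\<forall>j\<in>\<sigma>. c j = 0" and c_pos: "\<forall>j\<in>{..<n} - \<sigma>. 0 < c j"
    and "\<tau> \<in> Delta_c d n A c"
  shows "\<tau> \<subseteq> \<sigma>"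
proof
  obtain y where \<tau>: "\<tau> \<subseteq> {..<n}" and tight: "\<forall>j\<in>\<tau>. (\<Sum>i<d. y i * RA A i j) = c j"
    and slack: "\<forall>j\<in>{..<n} - \<tau>. (\<Sum>i<d. y i * RA A i j) < c j"
    using assms(3) unfolding Delta_c_def by blast
  text \<open>y is non-positive on the basis columns, hence on the whole cone, so it cannot
    be tight at a column where c is positive.\<close>
  have basis_nonpos: "(\<Sum>i<d. y i * RA A i k) \<le> 0" if "k \<in> \<sigma>" for k
    using tight slack c_basis basis_subset that by (cases "k \<in> \<tau>") force+
  fix j assume j: "j \<in> \<tau>"
  show "j \<in> \<sigma>"
  proof (rule ccontr)
    assume "j \<notin> \<sigma>"
    have "j < n" using j \<tau> by auto
    have "(\<Sum>i<d. y i * RA A i j) \<le> 0"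
      unfolding dot_eq_coord_sum[of y "\<lambda>i. RA A i j"]
      by (intro sum_nonpos mult_nonneg_nonpos coord_column_nonneg \<open>j < n\<close> basis_nonpos)
    moreover have "(\<Sum>i<d. y i * RA A i j) = c j"
      using tight j by blast
    moreover have "0 < c j"
      using c_pos \<open>j \<notin> \<sigma>\<close> \<open>j < n\<close> by simp
    ultimately show False by linarith
  qed
qed

lemma faces_subset_Delta_c:
  assumes c_basis: "\<forall>j\<in>\<sigma>. c j = 0" and c_pos: "\<forall>j\<in>{..<n} - \<sigma>. 0 < c j"
    and \<tau>: "\<tau> \<subseteq> \<sigma>"
  shows "\<tau> \<in> Delta_c d n A c"
proof -
  text \<open>The witness is minus the sum of the rows of A_\<sigma>^(-1) indexed by \<sigma> - \<tau>.\<close>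
  define y where "y i = - (\<Sum>k\<in>\<sigma> - \<tau>. coord (\<lambda>i'. if i' = i then 1 else 0) k)" for i
  have y_dot: "(\<Sum>i<d. y i * RA A i j) = - (\<Sum>k\<in>\<sigma> - \<tau>. coord (\<lambda>i. RA A i j) k)" for j
  proof -
    have "(\<Sum>i<d. y i * RA A i j)
        = - (\<Sum>k\<in>\<sigma> - \<tau>. \<Sum>i<d. coord (\<lambda>i'. if i' = i then 1 else 0) k * RA A i j)"
      unfolding y_def by (subst sum.swap) (simp add: sum_distrib_right sum_negf)
    also have "\<dots> = - (\<Sum>k\<in>\<sigma> - \<tau>. coord (\<lambda>i. RA A i j) k)"
      by (simp add: coord_row)
    finally show ?thesis .
  qed
  have "(\<Sum>i<d. y i * RA A i j) = c j" if "j \<in> \<tau>" for j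
  proof -
    have "(\<Sum>k\<in>\<sigma> - \<tau>. coord (\<lambda>i. RA A i j) k) = 0"
      using that \<tau> by (intro sum.neutral) (auto simp: coord_basis_column)
    then show ?thesis using that \<tau> c_basis by (auto simp: y_dot)
  qed
  moreover have "(\<Sum>i<d. y i * RA A i j) < c j" if j: "j \<in> {..<n} - \<tau>" for j
  proof (cases "j \<in> \<sigma>")
    case True
    then have "(\<Sum>k\<in>\<sigma> - \<tau>. coord (\<lambda>i. RA A i j) k) = (\<Sum>k\<in>\<sigma> - \<tau>. if k = j then 1 else 0)"
      by (intro sum.cong) (auto simp: coord_basis_column)
    also have "\<dots> = 1"
      using True j finite_basis by simp
    finally have "(\<Sum>k\<in>\<sigma> - \<tau>. coord (\<lambda>i. RA A i j) k) = 1" .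
    then show ?thesis using True c_basis by (simp add: y_dot)
  next
    case False
    have "0 \<le> (\<Sum>k\<in>\<sigma> - \<tau>. coord (\<lambda>i. RA A i j) k)"
      using j by (intro sum_nonneg coord_column_nonneg) auto
    moreover have "0 < c j" using False j c_pos by simp
    ultimately show ?thesis by (simp add: y_dot)
  qed
  ultimately show "\<tau> \<in> Delta_c d n A c"
    unfolding Delta_c_def using \<tau> basis_subset by blast
qed

lemma Delta_c_eq_faces:
  assumes "\<forall>j\<in>\<sigma>. c j = 0" "\<forall>j\<in>{..<n} - \<sigma>. 0 < c j"
  shows "Delta_c d n A c = Pow \<sigma>"
  using Delta_c_subset_faces[OF assms] faces_subset_Delta_c[OF assms] by blast

lemma dual_vec_eq_zero:
  assumes c_basis: "\<forall>j\<in>\<sigma>. c j = 0"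
  shows "dual_vec d A c \<sigma> = (\<lambda>_. 0)"
  unfolding dual_vec_def
proof (rule the_equality)
  fix y assume y: "(\<forall>j\<in>\<sigma>. (\<Sum>i<d. y i * RA A i j) = c j) \<and> (\<forall>i\<ge>d. y i = 0)"
  text \<open>y is orthogonal to a basis, in particular to itself.\<close>
  obtain l where l: "\<forall>i<d. (\<Sum>k\<in>\<sigma>. RA A i k * l k) = y i"
    using basis_spans by blast
  have "(\<Sum>i<d. y i * y i) = (\<Sum>i<d. y i * (\<Sum>k\<in>\<sigma>. RA A i k * l k))"
    using l by simp
  also have "\<dots> = (\<Sum>k\<in>\<sigma>. l k * (\<Sum>i<d. y i * RA A i k))"
    unfolding sum_distrib_left by (subst sum.swap) (simp add: mult_ac)
  also have "\<dots> = 0"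
    using y c_basis by simp
  finally have "\<forall>i\<in>{..<d}. y i * y i = 0"
    by (subst sum_nonneg_eq_0_iff[symmetric]) auto
  then show "y = (\<lambda>_. 0)"
    using y by (metis lessThan_iff mult_eq_0_iff not_less ext)
qed (use c_basis in simp)

section \<open>Heights\<close>

lemma nonneg_kernel_trivial:
  assumes "\<forall>j<n. 0 \<le> x j" "\<forall>i<d. (\<Sum>j<n. RA A i j * x j) = 0" "j < n"
  shows "x j = 0"
  using standing[unfolded standing_assms_def, THEN conjunct2, THEN conjunct2, THEN conjunct1,
      rule_format, of x] assms by blast

definition height :: "nat \<Rightarrow> real" where
  "height j = (\<Sum>k\<in>\<sigma>. coord (\<lambda>i. RA A i j) k)"

lemma height_pos:
  assumes j: "j \<in> {..<n} - \<sigma>"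
  shows "0 < height j"
proof (rule ccontr)
  assume "\<not> 0 < height j"
  moreover have "0 \<le> height j"
    unfolding height_def using j by (intro sum_nonneg coord_column_nonneg) auto
  ultimately have zero: "\<forall>k\<in>\<sigma>. coord (\<lambda>i. RA A i j) k = 0"
    unfolding height_def using j finite_basis
    by (subst sum_nonneg_eq_0_iff[symmetric]) (auto intro: coord_column_nonneg)
  text \<open>Then a_j = 0, and the j-th unit vector is a non-zero non-negative element of
    the kernel of A.\<close>
  have "RA A i j = 0" if "i < d" for i
  proof -
    have "(\<Sum>k\<in>\<sigma>. RA A i k * coord (\<lambda>i. RA A i j) k) = 0"
      using zero by simp
    then show ?thesis
      using coord_eq[OF that, of "\<lambda>i. RA A i j"] by linarith
  qed
  then have "\<forall>i<d. (\<Sum>j'<n. RA A i j' * (if j' = j then 1 else 0)) = 0"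
    using j by (simp add: if_distrib cong: if_cong)
  then have "(\<lambda>j'. if j' = j then 1 else 0 :: real) j = 0"
    using j by (intro nonneg_kernel_trivial) auto
  then show False by simp
qed

lemma coord_of_solution:
  assumes Ax: "\<forall>i<d. (\<Sum>j<n. A i j * x j) = b i" and k: "k \<in> \<sigma>"
  shows "coord (of_int \<circ> b) k
           = of_int (x k) + (\<Sum>j\<in>{..<n} - \<sigma>. of_int (x j) * coord (\<lambda>i. RA A i j) k)"
proof -
  have "coord (of_int \<circ> b) = coord (\<lambda>i. \<Sum>j<n. RA A i j * of_int (x j))"
    by (rule coord_cong) (simp add: Ax[rule_format, symmetric] RA_def)
  then show ?thesis
    using coord_comb[OF k] by simp
qed

lemma gr_feasible_le_floor:
  assumes "gr_feasible d n A \<sigma> b x" "k \<in> \<sigma>"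
  shows "x k \<le> \<lfloor>coord (of_int \<circ> b) k\<rfloor>"
proof -
  have "0 \<le> (\<Sum>j\<in>{..<n} - \<sigma>. of_int (x j) * coord (\<lambda>i. RA A i j) k)"
    using assms unfolding gr_feasible_def
    by (intro sum_nonneg mult_nonneg_nonneg coord_column_nonneg) auto
  then show ?thesis
    using assms coord_of_solution[of x b k] unfolding gr_feasible_def by (simp add: le_floor_iff)
qed

lemma solution_height_sum:
  assumes "\<forall>i<d. (\<Sum>j<n. A i j * x j) = b i"
  shows "(\<Sum>j\<in>{..<n} - \<sigma>. of_int (x j) * height j) = (\<Sum>k\<in>\<sigma>. coord (of_int \<circ> b) k - of_int (x k))"
  unfolding height_def sum_distrib_left
  by (subst sum.swap) (simp add: coord_of_solution[OF assms])

section \<open>Floor solutions\<close>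

definition floor_solution :: "(nat \<Rightarrow> int) \<Rightarrow> (nat \<Rightarrow> int) \<Rightarrow> bool" where
  "floor_solution b x \<longleftrightarrow> gr_feasible d n A \<sigma> b x \<and> (\<forall>k\<in>\<sigma>. x k = \<lfloor>coord (of_int \<circ> b) k\<rfloor>)"

lemma coord_nonneg_of_inNA: "inNA d n A b \<Longrightarrow> k \<in> \<sigma> \<Longrightarrow> 0 \<le> coord (of_int \<circ> b) k"
proof -
  assume "inNA d n A b" "k \<in> \<sigma>"
  then obtain u where u: "\<forall>i<d. (\<Sum>j<n. A i j * int (u j)) = b i"
    unfolding inNA_def by blast
  have "\<forall>i<d. (\<Sum>j<n. RA A i j * real (u j)) = real_of_int (b i)"
    using u by (simp add: RA_def flip: u[rule_format])
  then have "rcone d (RA A) {..<n} (of_int \<circ> b)"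
    unfolding rcone_def by (intro exI[of _ "\<lambda>j. real (u j)"]) simp
  then show ?thesis
    using basis_cone coord_nonneg_of_rcone \<open>k \<in> \<sigma>\<close> by blast
qed

lemma floor_solution_nonneg:
  assumes "inNA d n A b" "floor_solution b x"
  shows "0 \<le> x j"
  using assms coord_nonneg_of_inNA[OF assms(1), of j]
  unfolding floor_solution_def gr_feasible_def by (cases "j < n"; cases "j \<in> \<sigma>") auto

lemma floor_solution_height_sum:
  assumes "floor_solution b x"
  shows "(\<Sum>j\<in>{..<n} - \<sigma>. of_int (x j) * height j) = (\<Sum>k\<in>\<sigma>. frac (coord (of_int \<circ> b) k))"
  using assms solution_height_sum[of x b]
  unfolding floor_solution_def gr_feasible_def by (simp add: frac_def)

definition floor_residual :: "(nat \<Rightarrow> int) \<Rightarrow> nat \<Rightarrow> int" where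
  "floor_residual b i = b i - (\<Sum>k\<in>\<sigma>. \<lfloor>coord (of_int \<circ> b) k\<rfloor> * A i k)"

lemma coord_floor_residual:
  assumes "k \<in> \<sigma>"
  shows "coord (of_int \<circ> floor_residual b) k = frac (coord (of_int \<circ> b) k)"
proof (rule coord_unique[symmetric, OF _ assms], intro allI impI)
  fix i assume "i < d"
  then show "(\<Sum>k\<in>\<sigma>. RA A i k * frac (coord (of_int \<circ> b) k)) = (of_int \<circ> floor_residual b) i"
    using coord_eq[OF \<open>i < d\<close>, of "of_int \<circ> b"]
    by (simp add: floor_residual_def frac_def RA_def right_diff_distrib sum_subtractf mult.commute)
qed

lemma floor_residual_inNA:
  assumes "normal_mat d n A"
  shows "inNA d n A (floor_residual b)"
proof -
  have "rcone d (RA A) \<sigma> (\<lambda>i. of_int (floor_residual b i))"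
    unfolding rcone_def
  proof (intro exI[of _ "coord (of_int \<circ> floor_residual b)"] conjI ballI allI impI)
    show "0 \<le> coord (of_int \<circ> floor_residual b) k" if "k \<in> \<sigma>" for k
      by (simp add: coord_floor_residual[OF that])
    show "(\<Sum>k\<in>\<sigma>. RA A i k * coord (of_int \<circ> floor_residual b) k) = of_int (floor_residual b i)"
      if "i < d" for i
      using coord_eq[OF that, of "of_int \<circ> floor_residual b"] by simp
  qed
  then show ?thesis
    using assms[unfolded normal_mat_def, rule_format, of "floor_residual b"] basis_cone by simp
qed

lemma ip_feasible_imp_gr_feasible: "ip_feasible d n A b u \<Longrightarrow> gr_feasible d n A \<sigma> b (\<lambda>j. int (u j))"
  by (simp add: ip_feasible_def gr_feasible_def)

lemma gr_feasible_imp_ip_feasible: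
  "gr_feasible d n A \<sigma> b x \<Longrightarrow> \<forall>j. 0 \<le> x j \<Longrightarrow> ip_feasible d n A b (\<lambda>j. nat (x j))"
  by (simp add: ip_feasible_def gr_feasible_def)

lemma floor_solution_exists:
  assumes normal: "normal_mat d n A" and b: "inNA d n A b"
  obtains u where "ip_feasible d n A b u" "floor_solution b (\<lambda>j. int (u j))"
proof -
  let ?c = "coord (of_int \<circ> b)"
  text \<open>A non-negative solution of A v = floor_residual b has v_\<sigma> = 0, because the
    coordinates of floor_residual b are fractional parts; adding the floors on \<sigma> solves A u = b.\<close>
  obtain v where v: "\<forall>i<d. (\<Sum>j<n. A i j * int (v j)) = floor_residual b i"
    using floor_residual_inNA[OF normal] unfolding inNA_def by blast
  define v' where "v' j = (if j < n then v j else 0)" for j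
  have v': "ip_feasible d n A (floor_residual b) v'"
    using v by (simp add: ip_feasible_def v'_def)
  have v'_basis: "v' k = 0" if "k \<in> \<sigma>" for k
  proof -
    have "\<lfloor>coord (of_int \<circ> floor_residual b) k\<rfloor> = 0"
      by (simp add: coord_floor_residual[OF that] floor_eq_iff frac_lt_1)
    then show ?thesis
      using gr_feasible_le_floor[OF ip_feasible_imp_gr_feasible[OF v'] that] by simp
  qed
  define u where "u j = v' j + (if j \<in> \<sigma> then nat \<lfloor>?c j\<rfloor> else 0)" for j
  have "(\<Sum>j<n. A i j * int (u j)) = b i" if "i < d" for i
  proof -
    have "(\<Sum>j<n. A i j * int (u j))
        = (\<Sum>j<n. A i j * int (v' j)) + (\<Sum>j<n. if j \<in> \<sigma> then \<lfloor>?c j\<rfloor> * A i j else 0)"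
      unfolding sum.distrib[symmetric]
      by (rule sum.cong) (auto simp: u_def coord_nonneg_of_inNA[OF b] algebra_simps)
    also have "(\<Sum>j<n. if j \<in> \<sigma> then \<lfloor>?c j\<rfloor> * A i j else 0) = (\<Sum>k\<in>\<sigma>. \<lfloor>?c k\<rfloor> * A i k)"
      using basis_subset by (simp add: sum.If_cases Int_absorb1)
    finally show ?thesis
      using v' that by (simp add: ip_feasible_def floor_residual_def)
  qed
  then have "ip_feasible d n A b u"
    using v' basis_subset by (auto simp: ip_feasible_def u_def)
  moreover have "floor_solution b (\<lambda>j. int (u j))"
    using ip_feasible_imp_gr_feasible[OF calculation] v'_basis coord_nonneg_of_inNA[OF b]
    by (simp add: floor_solution_def u_def)
  ultimately show thesis ..
qed

section \<open>The cost vector\<close>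

definition radix :: nat where
  "radix = nat \<lceil>real (card \<sigma>) / Min (height ` ({..<n} - \<sigma>))\<rceil> + 1"

text \<open>With R = radix, S = R^n and M = 2 n R + 1, the cost of a column j outside \<sigma> is
  S \<lceil>M height j\<rceil> + R^j. The first term dominates and penalises every unit by which a
  lattice point falls short of the floor of the coordinates of b; the second term reads
  the non-basic part of a floor solution as a number in base R, which breaks all ties.
  The Min in radix is over a non-empty set whenever some column lies outside \<sigma>, the only
  case in which radix is used.\<close>
definition gomory_cost :: "nat \<Rightarrow> int" where
  "gomory_cost j = (if j \<in> {..<n} - \<sigma>
     then int radix ^ n * \<lceil>real (2 * n * radix + 1) * height j\<rceil> + int radix ^ j else 0)"

definition cost_of :: "(nat \<Rightarrow> int) \<Rightarrow> int" where
  "cost_of x = (\<Sum>j<n. gomory_cost j * x j)"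

lemma radix_ge_1: "1 \<le> radix"
  by (simp add: radix_def)

lemma cost_of_nonbasic: "cost_of x = (\<Sum>j\<in>{..<n} - \<sigma>. gomory_cost j * x j)"
  unfolding cost_of_def by (rule sum.mono_neutral_right) (auto simp: gomory_cost_def)

lemma gomory_cost_bounds:
  assumes "j \<in> {..<n} - \<sigma>"
  shows "real radix ^ n * real (2 * n * radix + 1) * height j \<le> gomory_cost j"
    and "gomory_cost j \<le> real radix ^ n * real (2 * n * radix + 1) * height j + 2 * real radix ^ n"
proof -
  let ?S = "real radix ^ n" and ?M = "real (2 * n * radix + 1)"
  have cost: "gomory_cost j = ?S * \<lceil>?M * height j\<rceil> + real radix ^ j"
    using assms by (simp add: gomory_cost_def)
  have power: "0 \<le> real radix ^ j" "real radix ^ j \<le> ?S"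
    using assms radix_ge_1 by (auto intro: power_increasing)
  have "?S * (?M * height j) \<le> ?S * \<lceil>?M * height j\<rceil>"
    by (rule mult_left_mono) (simp_all add: le_of_int_ceiling)
  moreover have "?S * \<lceil>?M * height j\<rceil> \<le> ?S * (?M * height j + 1)"
    by (rule mult_left_mono) (linarith, simp)
  ultimately show "?S * ?M * height j \<le> gomory_cost j" "gomory_cost j \<le> ?S * ?M * height j + 2 * ?S"
    using power unfolding cost mult.assoc distrib_left mult_1_right by linarith+
qed

lemma gomory_cost_pos:
  assumes "j \<in> {..<n} - \<sigma>"
  shows "0 < gomory_cost j"
proof -
  have "(0::real) < real (2 * n * radix + 1)"
    by (simp only: of_nat_0_less_iff)
  then have "0 < real (2 * n * radix + 1) * height j"
    using height_pos[OF assms] by (rule mult_pos_pos)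
  then have "0 \<le> int radix ^ n * \<lceil>real (2 * n * radix + 1) * height j\<rceil>"
    by (intro mult_nonneg_nonneg) (simp, linarith)
  moreover have "0 < int radix ^ j"
    using radix_ge_1 by simp
  moreover have "gomory_cost j
      = int radix ^ n * \<lceil>real (2 * n * radix + 1) * height j\<rceil> + int radix ^ j"
    using assms by (simp add: gomory_cost_def)
  ultimately show ?thesis
    by linarith
qed

lemma gomory_cost_nonneg: "0 \<le> gomory_cost j"
  using gomory_cost_pos[of j] by (cases "j \<in> {..<n} - \<sigma>") (auto simp: gomory_cost_def)

lemma cost_of_nonneg: "\<forall>j\<in>{..<n} - \<sigma>. 0 \<le> x j \<Longrightarrow> 0 \<le> cost_of x"
  unfolding cost_of_nonbasic by (intro sum_nonneg mult_nonneg_nonneg gomory_cost_nonneg) auto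

lemma Delta_c_gomory_cost: "Delta_c d n A (\<lambda>j. real_of_int (gomory_cost j)) = Pow \<sigma>"
proof (rule Delta_c_eq_faces)
  show "\<forall>j\<in>\<sigma>. real_of_int (gomory_cost j) = 0"
    by (simp add: gomory_cost_def)
  show "\<forall>j\<in>{..<n} - \<sigma>. 0 < real_of_int (gomory_cost j)"
    using gomory_cost_pos by simp
qed

lemma gr_objective_gomory_cost:
  "(\<Sum>j\<in>{..<n} - \<sigma>. reduced_cost d A (\<lambda>j. real_of_int (gomory_cost j)) \<sigma> j * real_of_int (x j))
     = real_of_int (cost_of x)"
  by (simp add: reduced_cost_def dual_vec_eq_zero gomory_cost_def cost_of_nonbasic)

lemma ip_objective_gomory_cost:
  "(\<Sum>j<n. real_of_int (gomory_cost j) * real (u j)) = real_of_int (cost_of (\<lambda>j. int (u j)))"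
  by (simp add: cost_of_def)

lemma floor_solution_less_radix:
  assumes x: "floor_solution b x" and j: "j \<in> {..<n} - \<sigma>"
  shows "x j < radix"
proof -
  let ?hmin = "Min (height ` ({..<n} - \<sigma>))"
  have nonneg: "\<forall>j\<in>{..<n} - \<sigma>. 0 \<le> x j"
    using x unfolding floor_solution_def gr_feasible_def by blast
  have "?hmin \<le> height j" "?hmin \<in> height ` ({..<n} - \<sigma>)"
    using j by (auto intro: Min_le Min_in)
  then have hmin: "0 < ?hmin" "?hmin \<le> height j"
    using height_pos by auto
  have "of_int (x j) * height j \<le> (\<Sum>j\<in>{..<n} - \<sigma>. of_int (x j) * height j)"
  proof (rule member_le_sum)
    fix i assume i: "i \<in> {..<n} - \<sigma> - {j}"
    show "0 \<le> of_int (x i) * height i"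
      using nonneg height_pos[of i] i by (intro mult_nonneg_nonneg) auto
  qed (use j in auto)
  also have "\<dots> \<le> (\<Sum>k\<in>\<sigma>. 1)"
    unfolding floor_solution_height_sum[OF x] by (intro sum_mono less_imp_le[OF frac_lt_1])
  also have "\<dots> = real (card \<sigma>)"
    by simp
  finally have "of_int (x j) * height j \<le> real (card \<sigma>)" .
  moreover have "of_int (x j) * ?hmin \<le> of_int (x j) * height j"
    using hmin nonneg j by (intro mult_left_mono) auto
  ultimately have "of_int (x j) * ?hmin \<le> real (card \<sigma>)"
    by linarith
  then have "of_int (x j) \<le> real (card \<sigma>) / ?hmin"
    using hmin by (simp add: field_simps)
  then show ?thesis
    unfolding radix_def by linarith
qed

lemma cost_of_lower_bound:
  assumes "gr_feasible d n A \<sigma> b x"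
  shows "real radix ^ n * real (2 * n * radix + 1) * (\<Sum>j\<in>{..<n} - \<sigma>. of_int (x j) * height j)
           \<le> cost_of x"
proof -
  let ?S = "real radix ^ n" and ?M = "real (2 * n * radix + 1)"
  have "?S * ?M * (\<Sum>j\<in>{..<n} - \<sigma>. of_int (x j) * height j)
      = (\<Sum>j\<in>{..<n} - \<sigma>. of_int (x j) * (?S * ?M * height j))"
    by (simp add: sum_distrib_left mult_ac)
  also have "\<dots> \<le> (\<Sum>j\<in>{..<n} - \<sigma>. of_int (x j) * of_int (gomory_cost j))"
    using assms unfolding gr_feasible_def
    by (intro sum_mono mult_left_mono gomory_cost_bounds(1)) auto
  also have "\<dots> = cost_of x"
    by (simp add: cost_of_nonbasic mult.commute)
  finally show ?thesis .
qed

lemma floor_solution_nonbasic_sum: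
  assumes x: "floor_solution b x"
  shows "(\<Sum>j\<in>{..<n} - \<sigma>. real_of_int (x j)) \<le> real n * real radix"
proof -
  have "(\<Sum>j\<in>{..<n} - \<sigma>. real_of_int (x j)) \<le> (\<Sum>j\<in>{..<n} - \<sigma>. real radix)"
  proof (rule sum_mono)
    fix j assume "j \<in> {..<n} - \<sigma>"
    then have "x j \<le> int radix"
      using floor_solution_less_radix[OF x] by (simp add: less_imp_le)
    then have "real_of_int (x j) \<le> real_of_int (int radix)"
      by (simp only: of_int_le_iff)
    then show "real_of_int (x j) \<le> real radix"
      by simp
  qed
  also have "\<dots> \<le> (\<Sum>j<n. real radix)"
    by (rule sum_mono2) auto
  finally show ?thesis
    by simp
qed

lemma floor_solution_cost_upper_bound:
  assumes x: "floor_solution b x"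
  shows "cost_of x < real radix ^ n * real (2 * n * radix + 1) * ((\<Sum>k\<in>\<sigma>. frac (coord (of_int \<circ> b) k)) + 1)"
proof -
  let ?S = "real radix ^ n" and ?M = "real (2 * n * radix + 1)"
    and ?F = "\<Sum>k\<in>\<sigma>. frac (coord (of_int \<circ> b) k)"
  have nonneg: "\<forall>j\<in>{..<n} - \<sigma>. 0 \<le> x j"
    using x unfolding floor_solution_def gr_feasible_def by blast
  have "2 * ?S * (\<Sum>j\<in>{..<n} - \<sigma>. real_of_int (x j)) \<le> 2 * ?S * (real n * real radix)"
    using floor_solution_nonbasic_sum[OF x] by (intro mult_left_mono) auto
  also have "\<dots> < ?S * ?M"
    using radix_ge_1 by (simp add: algebra_simps)
  finally have tie_break: "2 * ?S * (\<Sum>j\<in>{..<n} - \<sigma>. real_of_int (x j)) < ?S * ?M" .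
  have "real_of_int (cost_of x) = (\<Sum>j\<in>{..<n} - \<sigma>. real_of_int (x j) * of_int (gomory_cost j))"
    by (simp add: cost_of_nonbasic mult.commute)
  also have "\<dots> \<le> (\<Sum>j\<in>{..<n} - \<sigma>. real_of_int (x j) * (?S * ?M * height j + 2 * ?S))"
    using nonneg by (intro sum_mono mult_left_mono gomory_cost_bounds(2)) auto
  also have "\<dots> = ?S * ?M * (\<Sum>j\<in>{..<n} - \<sigma>. of_int (x j) * height j)
                  + 2 * ?S * (\<Sum>j\<in>{..<n} - \<sigma>. real_of_int (x j))"
    by (simp add: algebra_simps sum.distrib sum_distrib_left)
  finally have "real_of_int (cost_of x) \<le> ?S * ?M * ?F + 2 * ?S * (\<Sum>j\<in>{..<n} - \<sigma>. real_of_int (x j))"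
    unfolding floor_solution_height_sum[OF x] .
  moreover have "?S * ?M * (?F + 1) = ?S * ?M * ?F + ?S * ?M"
    by (simp add: algebra_simps)
  ultimately show ?thesis
    using tie_break by linarith
qed

lemma floor_solution_cost_less:
  assumes x: "floor_solution b x" and x': "gr_feasible d n A \<sigma> b x'" "\<not> floor_solution b x'"
  shows "cost_of x < cost_of x'"
proof -
  let ?c = "\<lambda>k. coord (of_int \<circ> b) k"
  have le: "\<forall>k\<in>\<sigma>. x' k \<le> \<lfloor>?c k\<rfloor>"
    using gr_feasible_le_floor[OF x'(1)] by blast
  then obtain k where k: "k \<in> \<sigma>" "x' k < \<lfloor>?c k\<rfloor>"
    using x' unfolding floor_solution_def by force
  have "1 \<le> (\<Sum>k\<in>\<sigma>. \<lfloor>?c k\<rfloor> - x' k)"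
    using k le finite_basis by (intro order.trans[OF _ member_le_sum[of k]]) auto
  then have "(\<Sum>k\<in>\<sigma>. frac (?c k)) + 1 \<le> (\<Sum>k\<in>\<sigma>. frac (?c k) + of_int (\<lfloor>?c k\<rfloor> - x' k))"
    by (simp add: sum.distrib del: of_int_diff flip: of_int_sum)
  also have "\<dots> = (\<Sum>j\<in>{..<n} - \<sigma>. of_int (x' j) * height j)"
    using x'(1) solution_height_sum[of x' b] unfolding gr_feasible_def by (simp add: frac_def)
  finally have "real radix ^ n * real (2 * n * radix + 1) * ((\<Sum>k\<in>\<sigma>. frac (?c k)) + 1)
      \<le> real radix ^ n * real (2 * n * radix + 1) * (\<Sum>j\<in>{..<n} - \<sigma>. of_int (x' j) * height j)"
    by (intro mult_left_mono) auto
  with floor_solution_cost_upper_bound[OF x] cost_of_lower_bound[OF x'(1)] show ?thesis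
    by linarith
qed

definition nonbasic_part :: "(nat \<Rightarrow> int) \<Rightarrow> nat \<Rightarrow> int" where
  "nonbasic_part y j = (if j \<in> \<sigma> then 0 else y j)"

lemma floor_solution_digits:
  assumes y: "floor_solution b y"
  shows "\<forall>j<n. 0 \<le> nonbasic_part y j \<and> nonbasic_part y j < int radix"
proof (intro allI impI)
  fix j assume "j < n"
  then show "0 \<le> nonbasic_part y j \<and> nonbasic_part y j < int radix"
    using y floor_solution_less_radix[OF y, of j] radix_ge_1
    unfolding floor_solution_def gr_feasible_def nonbasic_part_def by auto
qed

lemma floor_solution_cost_mod:
  assumes y: "floor_solution b y"
  shows "cost_of y mod int radix ^ n = (\<Sum>j<n. int radix ^ j * nonbasic_part y j)"
proof -
  let ?R = "int radix"
  have "cost_of y = (\<Sum>j\<in>{..<n} - \<sigma>. ?R ^ n * (\<lceil>real (2 * n * radix + 1) * height j\<rceil> * y j) + ?R ^ j * y j)"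
    unfolding cost_of_nonbasic by (rule sum.cong) (auto simp: gomory_cost_def distrib_right mult.assoc)
  also have "\<dots> = ?R ^ n * (\<Sum>j\<in>{..<n} - \<sigma>. \<lceil>real (2 * n * radix + 1) * height j\<rceil> * y j)
                   + (\<Sum>j\<in>{..<n} - \<sigma>. ?R ^ j * y j)"
    by (simp add: sum.distrib sum_distrib_left)
  also have "(\<Sum>j\<in>{..<n} - \<sigma>. ?R ^ j * y j) = (\<Sum>j<n. ?R ^ j * nonbasic_part y j)"
    by (rule sum.mono_neutral_cong_left) (auto simp: nonbasic_part_def)
  finally show ?thesis
    using base_expansion_bounds[OF _ floor_solution_digits[OF y]] radix_ge_1 by simp
qed

lemma floor_solution_cost_inj:
  assumes x: "floor_solution b x" and x': "floor_solution b x'" and cost: "cost_of x = cost_of x'"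
  shows "x = x'"
proof
  have same_digits: "\<forall>j<n. nonbasic_part x j = nonbasic_part x' j"
    using radix_ge_1 floor_solution_cost_mod[OF x] floor_solution_cost_mod[OF x'] cost
    by (intro base_expansion_inj[OF _ floor_solution_digits[OF x] floor_solution_digits[OF x']]) simp_all
  fix j
  show "x j = x' j"
  proof (cases "j < n")
    case True
    then show ?thesis
      using same_digits x x' unfolding floor_solution_def nonbasic_part_def by (cases "j \<in> \<sigma>") auto
  next
    case False
    then show ?thesis
      using x x' unfolding floor_solution_def gr_feasible_def by simp
  qed
qed

lemma gomory_cost_minimiser:
  assumes normal: "normal_mat d n A" and b: "inNA d n A b"
  obtains p where "ip_feasible d n A b p" "floor_solution b (\<lambda>j. int (p j))"
    "\<And>x. gr_feasible d n A \<sigma> b x \<Longrightarrow> cost_of (\<lambda>j. int (p j)) \<le> cost_of x"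
proof -
  let ?cost = "\<lambda>u. cost_of (\<lambda>j. int (u j))"
  obtain u0 where u0: "ip_feasible d n A b u0" "floor_solution b (\<lambda>j. int (u0 j))"
    using floor_solution_exists[OF normal b] .
  obtain p where p: "ip_feasible d n A b p"
    and p_min: "\<And>u. ip_feasible d n A b u \<Longrightarrow> ?cost p \<le> ?cost u"
    using ex_has_least_nat[of "ip_feasible d n A b" u0 "\<lambda>u. nat (?cost u)"] u0(1) cost_of_nonneg
    by (metis nat_le_eq_zle of_nat_0_le_iff)
  text \<open>A point that is not a floor solution costs more than u0, so p is a floor solution,
    and in the group relaxation p only competes with floor solutions, which are non-negative.\<close>
  have p_floor: "floor_solution b (\<lambda>j. int (p j))"
    using floor_solution_cost_less[OF u0(2) ip_feasible_imp_gr_feasible[OF p]] p_min[OF u0(1)]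
    by fastforce
  have "?cost p \<le> cost_of x" if x: "gr_feasible d n A \<sigma> b x" for x
  proof (cases "floor_solution b x")
    case True
    then show ?thesis
      using p_min[OF gr_feasible_imp_ip_feasible[OF x]] floor_solution_nonneg[OF b] by simp
  next
    case False
    then show ?thesis
      using floor_solution_cost_less[OF p_floor x] by simp
  qed
  with p p_floor show thesis ..
qed

lemma gomory_cost_solves:
  assumes normal: "normal_mat d n A" and b: "inNA d n A b"
  shows "(\<exists>!u. ip_optimal d n A (\<lambda>j. real_of_int (gomory_cost j)) b u)
         \<and> gr_solves d n A (\<lambda>j. real_of_int (gomory_cost j)) \<sigma> b"
proof -
  obtain p where p: "ip_feasible d n A b p" and p_floor: "floor_solution b (\<lambda>j. int (p j))"
    and p_min: "\<And>x. gr_feasible d n A \<sigma> b x \<Longrightarrow> cost_of (\<lambda>j. int (p j)) \<le> cost_of x"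
    by (rule gomory_cost_minimiser[OF normal b]) blast
  have "ip_optimal d n A (\<lambda>j. real_of_int (gomory_cost j)) b p"
    using p p_min[OF ip_feasible_imp_gr_feasible]
    by (simp add: ip_optimal_def ip_objective_gomory_cost)
  moreover have "v = p" if "ip_optimal d n A (\<lambda>j. real_of_int (gomory_cost j)) b v" for v
  proof -
    have v: "ip_feasible d n A b v" "cost_of (\<lambda>j. int (v j)) \<le> cost_of (\<lambda>j. int (p j))"
      using that p by (auto simp: ip_optimal_def ip_objective_gomory_cost)
    then have "floor_solution b (\<lambda>j. int (v j))"
      using floor_solution_cost_less[OF p_floor ip_feasible_imp_gr_feasible[OF v(1)]] by fastforce
    then have "(\<lambda>j. int (v j)) = (\<lambda>j. int (p j))"
      using floor_solution_cost_inj[OF _ p_floor] v p_min[OF ip_feasible_imp_gr_feasible[OF v(1)]]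
      by simp
    then show "v = p"
      by (simp add: fun_eq_iff)
  qed
  moreover have "gr_optimal d n A (\<lambda>j. real_of_int (gomory_cost j)) \<sigma> b (\<lambda>j. int (p j))"
    using ip_feasible_imp_gr_feasible[OF p] p_min gr_objective_gomory_cost[of "\<lambda>j. int (p j)"]
    by (simp add: gr_optimal_def gr_objective_gomory_cost)
  then have "gr_solves d n A (\<lambda>j. real_of_int (gomory_cost j)) \<sigma> b"
    unfolding gr_solves_def by (intro exI[of _ "\<lambda>j. int (p j)"]) simp
  ultimately show ?thesis
    by blast
qed

end

theorem corollary4p8:
  fixes d n :: nat and A :: "nat \<Rightarrow> nat \<Rightarrow> int"
  assumes "standing_assms d n A"
    and "normal_mat d n A"
    and "simplicial_cone d n A"
  shows "\<exists>c :: nat \<Rightarrow> int.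
           generic_cost d n A (\<lambda>j. real_of_int (c j)) \<and>
           coarsest_triangulation d n A (Delta_c d n A (\<lambda>j. real_of_int (c j))) \<and>
           gomory_family d n A (\<lambda>j. real_of_int (c j))"
proof -
  obtain \<sigma> where "\<sigma> \<subseteq> {..<n}" "lin_indep_cols d (RA A) \<sigma>"
    "\<And>b. rcone d (RA A) \<sigma> b \<longleftrightarrow> rcone d (RA A) {..<n} b"
    using simplicial_cone_column_basis[OF assms(3)] by blast
  then interpret cone_basis d n A \<sigma>
    using assms(1) by unfold_locales
  have "generic_cost d n A (\<lambda>j. real_of_int (gomory_cost j))"
    unfolding generic_cost_def Delta_c_gomory_cost
    using triangulation_faces gomory_cost_solves[OF assms(2)] by blast
  moreover have "coarsest_triangulation d n A (Delta_c d n A (\<lambda>j. real_of_int (gomory_cost j)))"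
    unfolding Delta_c_gomory_cost by (rule coarsest_triangulation_faces)
  moreover have "maximal_face (Pow \<sigma>) \<sigma>"
    by (simp add: maximal_face_def)
  then have "gomory_family d n A (\<lambda>j. real_of_int (gomory_cost j))"
    unfolding gomory_family_def Delta_c_gomory_cost
    using gomory_cost_solves[OF assms(2)] by blast
  ultimately show ?thesis
    by (intro exI[of _ gomory_cost] conjI)
qed

end
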